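(* Let $n\ge1$, $\Gamma\ge1$, $\varphi:(0,1)\to[0,\infty)$ and $\alpha\in(0,1)$. Let $x_0>0$ be $\mathcal{F}$-measurable with $(\sigma^\star_n)^2(x_0)>0$ almost surely. Then under $H_0(\Gamma)$, $$\mathbb{P}\big(\exists x\in(0,1): T^\star_n(x)\ge f^\star_{\alpha,n}(x)\,\big|\,\mathcal{F}\big)\le\alpha .$$
   Context: Paired observational study: $n$ pairs; in pair $i$, units $j=1,2$ have control potential outcome $R_{Cij}$, treated potential outcome $R_{Tij}$, treatment indicator $Z_{ij}\in\{0,1\}$; everything is conditional on exactly one unit per pair being treated. $\mathcal{F}$ is the $\sigma$-field generated by all potential outcomes. $R^{obs}_{ij}=Z_{ij}R_{Tij}+(1-Z_{ij})R_{Cij}$ and $Y_i=(Z_{i1}-Z_{i2})(R^{obs}_{i1}-R^{obs}_{i2})$. Ties among the $|Y_i|$ and zero values $Y_i=0$ are allowed. For $\Gamma\ge1$, $H_0(\Gamma)$ asserts: $R_{Tij}=R_{Cij}$ for all $i,j$; and conditional on $\mathcal{F}$, assignments are independent across pairs with $\frac1\Gamma\le \frac{\mathbb{P}(Z_{i1}=1\mid\mathcal{F})/\mathbb{P}(Z_{i1}=0\mid\mathcal{F})}{\mathbb{P}(Z_{i2}=1\mid\mathcal{F})/\mathbb{P}(Z_{i2}=0\mid\mathcal{F})}\le\Gamma$ for each $i$. Let $Y_{(1)},\dots,Y_{(n)}$ be any ordering of the $Y_i$ with $|Y_{(1)}|\le\dots\le|Y_{(n)}|$. For each $i$, let $\mathcal{J}_i=\{j\in[n]:|Y_{(j)}|=|Y_{(i)}|\}$,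 $m(i)=\min\mathcal{J}_i$, and $c^\star_i=|\mathcal{J}_i|^{-1}\sum_{j\in\mathcal{J}_i}\varphi(j/(n+1))$. Define $T^\star_n(x)=\sum_{\{i:\,m(i)\ge(1-x)(n+1)\}}c^\star_i\mathbf{1}\{Y_{(i)}>0\}$. Let $\rho_\Gamma=\Gamma/(1+\Gamma)$, $(\sigma^\star_n)^2(x)=\rho_\Gamma(1-\rho_\Gamma)\sum_{i=\lceil(1-x)(n+1)\rceil}^n(c^\star_i)^2$, $\lambda^\star_n=\sqrt{2\log(1/\alpha)/(\sigma^\star_n)^2(x_0)}$, and $f^\star_{\alpha,n}(x)=(\lambda^\star_n)^{-1}\big[\log(1/\alpha)+\sum_{i=\lceil(1-x)(n+1)\rceil}^n\log(1+\rho_\Gamma(e^{c^\star_i\lambda^\star_n}-1))\big]$. *)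

theory Defs
  imports "HOL-Probability.Probability"
begin

(* Pairs are indexed 1..n, units within a pair by j = 1,2.
   Conditional on F and on exactly one unit per pair being treated,
   the assignment of pair i is encoded by a boolean z i:
   z i = True  means  Z_i1 = 1, Z_i2 = 0;  z i = False means Z_i1 = 0, Z_i2 = 1. *)

definition Zind :: "(nat \<Rightarrow> bool) \<Rightarrow> nat \<Rightarrow> nat \<Rightarrow> real" where
  "Zind z i j = (if j = 1 then of_bool (z i) else of_bool (\<not> z i))"

definition Robs :: "(nat \<Rightarrow> nat \<Rightarrow> real) \<Rightarrow> (nat \<Rightarrow> nat \<Rightarrow> real) \<Rightarrow> (nat \<Rightarrow> bool)
                     \<Rightarrow> nat \<Rightarrow> nat \<Rightarrow> real" where
  "Robs RC RT z i j = Zind z i j * RT i j + (1 - Zind z i j) * RC i j"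

definition Ypair :: "(nat \<Rightarrow> nat \<Rightarrow> real) \<Rightarrow> (nat \<Rightarrow> nat \<Rightarrow> real) \<Rightarrow> (nat \<Rightarrow> bool)
                     \<Rightarrow> nat \<Rightarrow> real" where
  "Ypair RC RT z i = (Zind z i 1 - Zind z i 2) * (Robs RC RT z i 1 - Robs RC RT z i 2)"

definition is_abs_ordering :: "nat \<Rightarrow> (nat \<Rightarrow> real) \<Rightarrow> (nat \<Rightarrow> nat) \<Rightarrow> bool" where
  "is_abs_ordering n Y ord \<longleftrightarrow> bij_betw ord {1..n} {1..n} \<and>
     (\<forall>a\<in>{1..n}. \<forall>b\<in>{1..n}. a \<le> b \<longrightarrow> \<bar>Y (ord a)\<bar> \<le> \<bar>Y (ord b)\<bar>)"

(* In what follows Ys k stands for Y_(k), k = 1..n *)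
definition tie_set :: "nat \<Rightarrow> (nat \<Rightarrow> real) \<Rightarrow> nat \<Rightarrow> nat set" where
  "tie_set n Ys i = {j \<in> {1..n}. \<bar>Ys j\<bar> = \<bar>Ys i\<bar>}"

definition mtie :: "nat \<Rightarrow> (nat \<Rightarrow> real) \<Rightarrow> nat \<Rightarrow> nat" where
  "mtie n Ys i = Min (tie_set n Ys i)"

definition cstar :: "(real \<Rightarrow> real) \<Rightarrow> nat \<Rightarrow> (nat \<Rightarrow> real) \<Rightarrow> nat \<Rightarrow> real" where
  "cstar \<phi> n Ys i =
     (\<Sum>j\<in>tie_set n Ys i. \<phi> (real j / real (n + 1))) / real (card (tie_set n Ys i))"

definition Tstar :: "(real \<Rightarrow> real) \<Rightarrow> nat \<Rightarrow> (nat \<Rightarrow> real) \<Rightarrow> real \<Rightarrow> real" where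
  "Tstar \<phi> n Ys x =
     (\<Sum>i\<in>{i \<in> {1..n}. real (mtie n Ys i) \<ge> (1 - x) * (real n + 1)}.
        cstar \<phi> n Ys i * (if Ys i > 0 then 1 else 0))"

definition rhoG :: "real \<Rightarrow> real" where
  "rhoG \<Gamma> = \<Gamma> / (1 + \<Gamma>)"

definition upper_idx :: "nat \<Rightarrow> real \<Rightarrow> nat set" where
  "upper_idx n x = {i \<in> {1..n}. real i \<ge> (1 - x) * (real n + 1)}"

definition sigma2 :: "real \<Rightarrow> (real \<Rightarrow> real) \<Rightarrow> nat \<Rightarrow> (nat \<Rightarrow> real) \<Rightarrow> real \<Rightarrow> real" where
  "sigma2 \<Gamma> \<phi> n Ys x =
     rhoG \<Gamma> * (1 - rhoG \<Gamma>) * (\<Sum>i\<in>upper_idx n x. (cstar \<phi> n Ys i)\<^sup>2)"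

definition lambda_star :: "real \<Rightarrow> (real \<Rightarrow> real) \<Rightarrow> nat \<Rightarrow> real \<Rightarrow> (nat \<Rightarrow> real) \<Rightarrow> real \<Rightarrow> real" where
  "lambda_star \<Gamma> \<phi> n \<alpha> Ys x0 = sqrt (2 * ln (1 / \<alpha>) / sigma2 \<Gamma> \<phi> n Ys x0)"

definition f_star :: "real \<Rightarrow> (real \<Rightarrow> real) \<Rightarrow> nat \<Rightarrow> real \<Rightarrow> (nat \<Rightarrow> real) \<Rightarrow> real \<Rightarrow> real \<Rightarrow> real" where
  "f_star \<Gamma> \<phi> n \<alpha> Ys x0 x =
     (let lam = lambda_star \<Gamma> \<phi> n \<alpha> Ys x0 in
      (1 / lam) * (ln (1 / \<alpha>) +
        (\<Sum>i\<in>upper_idx n x. ln (1 + rhoG \<Gamma> * (exp (cstar \<phi> n Ys i * lam) - 1)))))"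

end

theory Submission
  imports Defs
begin

(* Under H0(Gamma) the observed differences are Y_i = +-D_i with D_i = R_Ci1 - R_Ci2, the sign
   being decided by the coin flip of pair i.  Hence |Y_i|, and with it every tie statistic, the
   scores c*_i and lambda*, do not depend on the assignment; only the signs are random.  Reading
   the ranks as thresholds, T*(x) >= f*(x) implies that the product over the pairs of minimal tie
   rank >= (1-x)(n+1) of the factors exp(lambda c_i 1{Y_i > 0}) / (1 + rho (exp(lambda c_i) - 1))
   is at least 1/alpha.  Each factor has mean at most 1 because the probability of a positive
   sign is at most rho, and a product of independent such factors, revealed pair by pair in
   decreasing order of rank, crosses 1/alpha with probability at most alpha (Ville). *)

lemma emeasure_pmf_le_ennreal: "1 \<le> a \<Longrightarrow> emeasure (measure_pmf P) B \<le> ennreal a"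
  using measure_pmf.emeasure_le_1 ennreal_leI order_trans by (metis ennreal_1)

lemma emeasure_Pi_pmf_insert:
  assumes "finite S" "x \<notin> S"
  shows "emeasure (Pi_pmf (insert x S) d M) A
       = (\<integral>\<^sup>+y. emeasure (Pi_pmf S d M) ((\<lambda>z. z(x := y)) -` A) \<partial>M x)"
  unfolding Pi_pmf_insert'[OF assms] map_pmf_def[symmetric]
  by (simp only: emeasure_bind_pmf emeasure_map_pmf)

lemma level_set_insert_max:
  fixes r :: "'i \<Rightarrow> 'r::linorder"
  assumes "\<And>y. y \<in> S \<Longrightarrow> r y \<le> r x"
  shows "{i\<in>insert x S. t \<le> r i} = (if t \<le> r x then insert x {i\<in>S. t \<le> r i} else {})"
  using assms by (auto intro: order_trans)

lemma crossing_preimage_fun_upd_max: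
  fixes r :: "'i \<Rightarrow> 'r::linorder" and F :: "'i \<Rightarrow> 'a \<Rightarrow> real"
  assumes "finite S" "\<And>y. y \<in> S \<Longrightarrow> r y \<le> r x" "\<not> c \<le> s" "x \<notin> S"
  shows "(\<lambda>z. z(x := y)) -` {z. \<exists>t. c \<le> s * (\<Prod>i\<in>{i\<in>insert x S. t \<le> r i}. F i (z i))}
    \<subseteq> {z. \<exists>t. c \<le> (s * F x y) * (\<Prod>i\<in>{i\<in>S. t \<le> r i}. F i (z i))}"
proof safe
  fix z t assume t: "c \<le> s * (\<Prod>i\<in>{i\<in>insert x S. t \<le> r i}. F i ((z(x := y)) i))"
  with \<open>\<not> c \<le> s\<close> have "t \<le> r x" and "{i\<in>insert x S. t \<le> r i} = insert x {i\<in>S. t \<le> r i}"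
    using level_set_insert_max[of S r x t] assms(2) by (auto split: if_splits)
  moreover have "(\<Prod>i\<in>{i\<in>S. t \<le> r i}. F i ((z(x := y)) i)) = (\<Prod>i\<in>{i\<in>S. t \<le> r i}. F i (z i))"
    using \<open>x \<notin> S\<close> by (intro prod.cong) auto
  ultimately show "\<exists>t. c \<le> s * F x y * (\<Prod>i\<in>{i\<in>S. t \<le> r i}. F i (z i))"
    using t assms by (auto simp: mult.assoc)
qed

lemma ville_inequality_Pi_pmf:
  fixes r :: "'i \<Rightarrow> 'r::linorder" and F :: "'i \<Rightarrow> 'a \<Rightarrow> real" and M :: "'i \<Rightarrow> 'a pmf"
  assumes "finite I" and "0 < c" and "0 \<le> s"
    and F_nonneg: "\<And>i y. i \<in> I \<Longrightarrow> 0 \<le> F i y"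
    and F_mean: "\<And>i. i \<in> I \<Longrightarrow> (\<integral>\<^sup>+y. F i y \<partial>M i) \<le> 1"
  shows "emeasure (Pi_pmf I d M) {z. \<exists>t. c \<le> s * (\<Prod>i\<in>{i\<in>I. t \<le> r i}. F i (z i))}
           \<le> ennreal (s / c)"
  using assms(1,3) F_nonneg F_mean
proof (induction I arbitrary: s rule: finite_ranking_induct[where f = r])
  case empty
  show ?case
  proof (cases "c \<le> s")
    case True
    then show ?thesis using \<open>0 < c\<close> by (intro emeasure_pmf_le_ennreal) simp
  qed simp
next
  case (insert x S)
  consider "c \<le> s" | "x \<in> S" | "\<not> c \<le> s" "x \<notin> S"
    by blast
  then show ?case
  proof cases
    case 1
    then show ?thesis using \<open>0 < c\<close> by (intro emeasure_pmf_le_ennreal) simp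
  next
    case 2
    then show ?thesis using insert.IH insert.prems by (simp add: insert_absorb)
  next
    case 3
    define A where "A = {z. \<exists>t. c \<le> s * (\<Prod>i\<in>{i\<in>insert x S. t \<le> r i}. F i (z i))}"
    define E where "E y = {z. \<exists>t. c \<le> (s * F x y) * (\<Prod>i\<in>{i\<in>S. t \<le> r i}. F i (z i))}" for y
    have preimage: "(\<lambda>z. z(x := y)) -` A \<subseteq> E y" for y
      unfolding A_def E_def using insert.hyps 3 by (rule crossing_preimage_fun_upd_max)
    have "emeasure (Pi_pmf (insert x S) d M) A
        = (\<integral>\<^sup>+y. emeasure (Pi_pmf S d M) ((\<lambda>z. z(x := y)) -` A) \<partial>M x)"
      using insert.hyps(1) \<open>x \<notin> S\<close> by (rule emeasure_Pi_pmf_insert)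
    also have "\<dots> \<le> (\<integral>\<^sup>+y. ennreal (s / c) * ennreal (F x y) \<partial>M x)"
    proof (rule nn_integral_mono)
      fix y
      have "emeasure (Pi_pmf S d M) ((\<lambda>z. z(x := y)) -` A) \<le> emeasure (Pi_pmf S d M) (E y)"
        using preimage by (rule emeasure_mono) simp
      also have "\<dots> \<le> ennreal (s * F x y / c)"
        unfolding E_def using insert.IH insert.prems by simp
      finally show "emeasure (Pi_pmf S d M) ((\<lambda>z. z(x := y)) -` A) \<le> ennreal (s / c) * ennreal (F x y)"
        using insert.prems \<open>0 < c\<close> by (simp add: ennreal_mult'[symmetric])
    qed
    also have "\<dots> = ennreal (s / c) * (\<integral>\<^sup>+y. F x y \<partial>M x)"
      by (rule nn_integral_cmult) simp
    also have "\<dots> \<le> ennreal (s / c)"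
      using mult_left_mono[OF insert.prems(3)[of x]] by simp
    finally show ?thesis unfolding A_def .
  qed
qed

lemma down_closed_eq_atLeastAtMost_card:
  fixes P :: "nat set"
  assumes "P \<subseteq> {1..n}" and down_closed: "\<And>j. j \<in> P \<Longrightarrow> {1..j} \<subseteq> P"
  shows "P = {1..card P}"
proof (cases "P = {}")
  case False
  have "finite P" using assms(1) finite_subset by blast
  then have "P = {1..Max P}"
    using False assms(1) down_closed[of "Max P"] by (auto intro: Max_ge Max_in)
  then show ?thesis by (metis card_atLeastAtMost diff_Suc_1)
qed simp

lemma sorted_filter_eq_atLeastAtMost_card:
  fixes A :: "nat \<Rightarrow> 'a::linorder"
  assumes bij: "bij_betw \<sigma> {1..n} {1..n}" and sorted: "mono_on {1..n} (\<lambda>k. A (\<sigma> k))"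
    and down_closed: "\<And>u w. u \<le> w \<Longrightarrow> Q w \<Longrightarrow> Q u"
  shows "{k\<in>{1..n}. Q (A (\<sigma> k))} = {1..card {i\<in>{1..n}. Q (A i)}}"
proof -
  have "inj_on \<sigma> {k\<in>{1..n}. Q (A (\<sigma> k))}"
    using bij by (auto simp: bij_betw_def intro: inj_on_subset)
  then have "card {k\<in>{1..n}. Q (A (\<sigma> k))} = card (\<sigma> ` {k\<in>{1..n}. Q (A (\<sigma> k))})"
    by (simp add: card_image)
  also have "\<sigma> ` {k\<in>{1..n}. Q (A (\<sigma> k))} = {i\<in>\<sigma> ` {1..n}. Q (A i)}"
    by auto
  also have "\<dots> = {i\<in>{1..n}. Q (A i)}"
    using bij by (simp add: bij_betw_def)
  moreover have "{k\<in>{1..n}. Q (A (\<sigma> k))} = {1..card {k\<in>{1..n}. Q (A (\<sigma> k))}}"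
  proof (rule down_closed_eq_atLeastAtMost_card)
    fix j assume j: "j \<in> {k\<in>{1..n}. Q (A (\<sigma> k))}"
    show "{1..j} \<subseteq> {k\<in>{1..n}. Q (A (\<sigma> k))}"
    proof
      fix k assume "k \<in> {1..j}"
      with j sorted have "k \<in> {1..n}" "A (\<sigma> k) \<le> A (\<sigma> j)"
        by (auto simp: monotone_on_def)
      with j down_closed show "k \<in> {k\<in>{1..n}. Q (A (\<sigma> k))}" by blast
    qed
  qed auto
  ultimately show ?thesis by simp
qed

lemma sorted_values_unique:
  fixes A :: "nat \<Rightarrow> 'a::linorder"
  assumes "bij_betw \<sigma> {1..n} {1..n}" "mono_on {1..n} (\<lambda>k. A (\<sigma> k))"
    and "bij_betw \<tau> {1..n} {1..n}" "mono_on {1..n} (\<lambda>k. A (\<tau> k))"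
    and j: "j \<in> {1..n}"
  shows "A (\<sigma> j) = A (\<tau> j)"
proof -
  have below: "{k\<in>{1..n}. A (\<sigma> k) < v} = {k\<in>{1..n}. A (\<tau> k) < v}" for v
  proof -
    have "{k\<in>{1..n}. A (\<sigma> k) < v} = {1..card {i\<in>{1..n}. A i < v}}"
      by (rule sorted_filter_eq_atLeastAtMost_card[OF assms(1,2)]) (rule order_le_less_trans)
    also have "\<dots> = {k\<in>{1..n}. A (\<tau> k) < v}"
      by (rule sorted_filter_eq_atLeastAtMost_card[OF assms(3,4), symmetric]) (rule order_le_less_trans)
    finally show ?thesis .
  qed
  have "A (\<sigma> j) < v \<longleftrightarrow> A (\<tau> j) < v" for v
    using below[of v, THEN eqset_imp_iff, of j] j by simp
  then show ?thesis
    by (cases "A (\<sigma> j)" "A (\<tau> j)" rule: linorder_cases) auto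
qed

lemma sorted_level_set:
  fixes A :: "nat \<Rightarrow> 'a::linorder"
  assumes "bij_betw \<sigma> {1..n} {1..n}" "mono_on {1..n} (\<lambda>k. A (\<sigma> k))"
  shows "{k\<in>{1..n}. A (\<sigma> k) = v} = {card {i\<in>{1..n}. A i < v}<..card {i\<in>{1..n}. A i \<le> v}}"
proof -
  have le: "{k\<in>{1..n}. A (\<sigma> k) \<le> v} = {1..card {i\<in>{1..n}. A i \<le> v}}"
    by (rule sorted_filter_eq_atLeastAtMost_card[OF assms]) (rule order_trans)
  have less: "{k\<in>{1..n}. A (\<sigma> k) < v} = {1..card {i\<in>{1..n}. A i < v}}"
    by (rule sorted_filter_eq_atLeastAtMost_card[OF assms]) (rule order_le_less_trans)
  have "{k\<in>{1..n}. A (\<sigma> k) = v} = {k\<in>{1..n}. A (\<sigma> k) \<le> v} - {k\<in>{1..n}. A (\<sigma> k) < v}"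
    by auto
  moreover have "{1..b} - {1..a} = {a<..b}" for a b :: nat
    by auto
  ultimately show ?thesis by (simp only: le less)
qed

(* Counterparts of tie_set, mtie and cstar indexed by the unit i instead of its rank: the ranks
   occupied by the tie class of i in any ordering by |Y|, the smallest of them, and their mean score. *)
definition tie_block :: "nat \<Rightarrow> (nat \<Rightarrow> real) \<Rightarrow> nat \<Rightarrow> nat set" where
  "tie_block n Y i = {card {j\<in>{1..n}. \<bar>Y j\<bar> < \<bar>Y i\<bar>}<..card {j\<in>{1..n}. \<bar>Y j\<bar> \<le> \<bar>Y i\<bar>}}"

definition tie_rank :: "nat \<Rightarrow> (nat \<Rightarrow> real) \<Rightarrow> nat \<Rightarrow> nat" where
  "tie_rank n Y i = Min (tie_block n Y i)"

definition tie_score :: "(real \<Rightarrow> real) \<Rightarrow> nat \<Rightarrow> (nat \<Rightarrow> real) \<Rightarrow> nat \<Rightarrow> real" where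
  "tie_score \<phi> n Y i =
     (\<Sum>j\<in>tie_block n Y i. \<phi> (real j / real (n + 1))) / real (card (tie_block n Y i))"

lemma tie_block_cong:
  assumes "\<forall>j\<in>{1..n}. \<bar>Y j\<bar> = \<bar>Y' j\<bar>" and "\<bar>Y i\<bar> = \<bar>Y' i\<bar>"
  shows "tie_block n Y i = tie_block n Y' i"
proof -
  have "{j\<in>{1..n}. R \<bar>Y j\<bar>} = {j\<in>{1..n}. R \<bar>Y' j\<bar>}" for R :: "real \<Rightarrow> bool"
    using assms(1) by auto
  from this[of "\<lambda>w. w < \<bar>Y i\<bar>"] this[of "\<lambda>w. w \<le> \<bar>Y i\<bar>"] show ?thesis
    using assms(2) by (simp add: tie_block_def)
qed

lemma is_abs_ordering_iff:
  "is_abs_ordering n Y \<sigma> \<longleftrightarrow> bij_betw \<sigma> {1..n} {1..n} \<and> mono_on {1..n} (\<lambda>k. \<bar>Y (\<sigma> k)\<bar>)"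
  by (auto simp: is_abs_ordering_def monotone_on_def)

lemma is_abs_ordering_cong:
  assumes "\<forall>i\<in>{1..n}. \<bar>Y i\<bar> = \<bar>Y' i\<bar>"
  shows "is_abs_ordering n Y \<sigma> \<longleftrightarrow> is_abs_ordering n Y' \<sigma>"
proof -
  have "\<bar>Y (\<sigma> a)\<bar> = \<bar>Y' (\<sigma> a)\<bar>" if "bij_betw \<sigma> {1..n} {1..n}" "a \<in> {1..n}" for a
    using assms that by (auto dest: bij_betwE)
  then show ?thesis
    unfolding is_abs_ordering_def by (simp cong: conj_cong)
qed

lemma tie_set_abs_ordering:
  assumes "is_abs_ordering n Y \<sigma>"
  shows "tie_set n (Y \<circ> \<sigma>) k = tie_block n Y (\<sigma> k)"
proof -
  have "tie_set n (Y \<circ> \<sigma>) k = {j\<in>{1..n}. \<bar>Y (\<sigma> j)\<bar> = \<bar>Y (\<sigma> k)\<bar>}"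
    by (simp add: tie_set_def)
  also have "\<dots> = tie_block n Y (\<sigma> k)"
    using assms unfolding is_abs_ordering_iff tie_block_def
    by (intro sorted_level_set[where A = "\<lambda>i. \<bar>Y i\<bar>"]) auto
  finally show ?thesis .
qed

lemma sum_abs_ordering_reindex:
  assumes "is_abs_ordering n Y \<sigma>"
  shows "(\<Sum>k\<in>{k\<in>{1..n}. P (mtie n (Y \<circ> \<sigma>) k)}. G (cstar \<phi> n (Y \<circ> \<sigma>) k) (Y (\<sigma> k)))
       = (\<Sum>i\<in>{i\<in>{1..n}. P (tie_rank n Y i)}. G (tie_score \<phi> n Y i) (Y i))"
proof -
  have bij: "bij_betw \<sigma> {1..n} {1..n}"
    using assms by (simp add: is_abs_ordering_iff)
  have "(\<Sum>k\<in>{k\<in>{1..n}. P (mtie n (Y \<circ> \<sigma>) k)}. G (cstar \<phi> n (Y \<circ> \<sigma>) k) (Y (\<sigma> k)))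
      = (\<Sum>k\<in>{k\<in>{1..n}. P (tie_rank n Y (\<sigma> k))}. G (tie_score \<phi> n Y (\<sigma> k)) (Y (\<sigma> k)))"
    using assms by (simp add: mtie_def tie_rank_def cstar_def tie_score_def tie_set_abs_ordering)
  also have "\<dots> = (\<Sum>k\<in>{1..n}. if P (tie_rank n Y (\<sigma> k)) then G (tie_score \<phi> n Y (\<sigma> k)) (Y (\<sigma> k)) else 0)"
    by (rule sum.inter_filter) simp
  also have "\<dots> = (\<Sum>i\<in>{1..n}. if P (tie_rank n Y i) then G (tie_score \<phi> n Y i) (Y i) else 0)"
    by (rule sum.reindex_bij_betw[OF bij])
  also have "\<dots> = (\<Sum>i\<in>{i\<in>{1..n}. P (tie_rank n Y i)}. G (tie_score \<phi> n Y i) (Y i))"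
    by (rule sum.inter_filter[symmetric]) simp
  finally show ?thesis .
qed

lemma cstar_nonneg:
  assumes "\<forall>t\<in>{0<..<1}. 0 \<le> \<phi> t"
  shows "0 \<le> cstar \<phi> n Ys k"
proof -
  have "0 \<le> \<phi> (real j / real (n + 1))" if "j \<in> tie_set n Ys k" for j
    using that assms by (auto simp: tie_set_def field_simps)
  then show ?thesis
    unfolding cstar_def by (intro divide_nonneg_nonneg sum_nonneg) auto
qed

lemma tie_score_nonneg:
  assumes "\<forall>t\<in>{0<..<1}. 0 \<le> \<phi> t"
  shows "0 \<le> tie_score \<phi> n Y i"
proof -
  have "card {j\<in>{1..n}. \<bar>Y j\<bar> \<le> \<bar>Y i\<bar>} \<le> card {1..n}"
    by (intro card_mono) auto
  then have "tie_block n Y i \<subseteq> {1..n}"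
    by (auto simp: tie_block_def)
  then have "0 \<le> \<phi> (real j / real (n + 1))" if "j \<in> tie_block n Y i" for j
    using that assms by (auto simp: field_simps)
  then show ?thesis
    unfolding tie_score_def by (intro divide_nonneg_nonneg sum_nonneg) auto
qed

lemma lambda_star_cong:
  assumes "\<forall>k\<in>{1..n}. \<bar>Ys k\<bar> = \<bar>Ys' k\<bar>"
  shows "lambda_star \<Gamma> \<phi> n \<alpha> Ys x0 = lambda_star \<Gamma> \<phi> n \<alpha> Ys' x0"
proof -
  have "cstar \<phi> n Ys k = cstar \<phi> n Ys' k" if "k \<in> {1..n}" for k
  proof -
    have "tie_set n Ys k = tie_set n Ys' k"
      using assms that by (auto simp: tie_set_def)
    then show ?thesis by (simp add: cstar_def)
  qed
  then have "sigma2 \<Gamma> \<phi> n Ys x0 = sigma2 \<Gamma> \<phi> n Ys' x0"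
    unfolding sigma2_def upper_idx_def by (intro arg_cong2[where f = "(*)"] sum.cong) auto
  then show ?thesis
    by (simp add: lambda_star_def)
qed

lemma lambda_star_abs_ordering_cong:
  assumes "is_abs_ordering n Y \<sigma>" "is_abs_ordering n Y' \<tau>" "\<forall>i\<in>{1..n}. \<bar>Y i\<bar> = \<bar>Y' i\<bar>"
  shows "lambda_star \<Gamma> \<phi> n \<alpha> (Y \<circ> \<sigma>) x0 = lambda_star \<Gamma> \<phi> n \<alpha> (Y' \<circ> \<tau>) x0"
proof (rule lambda_star_cong, intro ballI)
  fix k assume k: "k \<in> {1..n}"
  have "is_abs_ordering n Y \<tau>"
    using assms(2,3) is_abs_ordering_cong by blast
  then have "\<bar>Y (\<sigma> k)\<bar> = \<bar>Y (\<tau> k)\<bar>"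
    using assms(1) k unfolding is_abs_ordering_iff
    by (intro sorted_values_unique[where A = "\<lambda>i. \<bar>Y i\<bar>"]) auto
  also have "\<dots> = \<bar>Y' (\<tau> k)\<bar>"
    using assms(2,3) k by (auto simp: is_abs_ordering_def dest: bij_betwE)
  finally show "\<bar>(Y \<circ> \<sigma>) k\<bar> = \<bar>(Y' \<circ> \<tau>) k\<bar>"
    by simp
qed

(* ln E exp(u B) for B ~ Bernoulli(rho): the compensator summed in f*. *)
definition bernoulli_cgf :: "real \<Rightarrow> real \<Rightarrow> real" where
  "bernoulli_cgf \<rho> u = ln (1 + \<rho> * (exp u - 1))"

(* The factor contributed by one pair, with score u = lambda c and difference d, to the
   test supermartingale exp(lambda T - sum of compensators). *)
definition tilt_factor :: "real \<Rightarrow> real \<Rightarrow> real \<Rightarrow> real" where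
  "tilt_factor \<rho> u d = exp (u * (if d > 0 then 1 else 0) - bernoulli_cgf \<rho> u)"

lemma bernoulli_cgf_nonneg:
  assumes "0 \<le> \<rho>" "0 \<le> u"
  shows "0 \<le> bernoulli_cgf \<rho> u"
  using assms by (simp add: bernoulli_cgf_def)

lemma tilt_factor_eq:
  assumes "0 \<le> \<rho>" "0 \<le> u"
  shows "tilt_factor \<rho> u d = exp (u * (if d > 0 then 1 else 0)) / (1 + \<rho> * (exp u - 1))"
  using assms by (simp add: tilt_factor_def bernoulli_cgf_def exp_diff add_pos_nonneg)

lemma tilt_factor_mean_le_1:
  fixes d :: real
  assumes "0 \<le> u" "1 - \<rho> \<le> p" "p \<le> \<rho>"
  shows "tilt_factor \<rho> u d * p + tilt_factor \<rho> u (- d) * (1 - p) \<le> 1"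
proof -
  define H where "H = 1 + \<rho> * (exp u - 1)"
  have "0 \<le> \<rho>" "0 \<le> exp u - 1"
    using assms by auto
  then have "0 < H" "0 \<le> \<rho> * (exp u - 1)"
    by (simp_all add: H_def add_pos_nonneg)
  moreover have "p * (exp u - 1) \<le> \<rho> * (exp u - 1)" "(1 - p) * (exp u - 1) \<le> \<rho> * (exp u - 1)"
    using assms \<open>0 \<le> exp u - 1\<close> by (simp_all add: mult_right_mono)
  moreover consider "d > 0" | "d < 0" | "d = 0"
    using less_linear[of d 0] by blast
  ultimately have mean: "exp (u * (if d > 0 then 1 else 0)) * p
      + exp (u * (if - d > 0 then 1 else 0)) * (1 - p) \<le> H"
    by cases (auto simp: H_def algebra_simps)
  have "tilt_factor \<rho> u d' = exp (u * (if d' > 0 then 1 else 0)) / H" for d'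
    using assms \<open>0 \<le> \<rho>\<close> by (simp add: tilt_factor_eq H_def)
  then have "tilt_factor \<rho> u d * p + tilt_factor \<rho> u (- d) * (1 - p)
     = (exp (u * (if d > 0 then 1 else 0)) * p + exp (u * (if - d > 0 then 1 else 0)) * (1 - p)) / H"
    by (simp add: add_divide_distrib)
  also have "\<dots> \<le> 1"
    using mean \<open>0 < H\<close> by simp
  finally show ?thesis .
qed

lemma nn_integral_bernoulli_pmf_real:
  assumes "0 \<le> p" "p \<le> 1" "\<And>b. 0 \<le> f b"
  shows "(\<integral>\<^sup>+b. ennreal (f b) \<partial>bernoulli_pmf p) = ennreal (f True * p + f False * (1 - p))"
  using assms by (simp add: ennreal_mult)

lemma nn_integral_tilt_factor_bernoulli_le_1:
  fixes d :: real
  assumes "0 \<le> u" "1 - \<rho> \<le> p" "p \<le> \<rho>" "\<rho> \<le> 1"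
  shows "(\<integral>\<^sup>+b. tilt_factor \<rho> u (if b then d else - d) \<partial>bernoulli_pmf p) \<le> 1"
proof -
  have "(\<integral>\<^sup>+b. tilt_factor \<rho> u (if b then d else - d) \<partial>bernoulli_pmf p)
      = ennreal (tilt_factor \<rho> u d * p + tilt_factor \<rho> u (- d) * (1 - p))"
    using assms by (subst nn_integral_bernoulli_pmf_real) (auto simp: tilt_factor_def)
  also have "\<dots> \<le> 1"
    using tilt_factor_mean_le_1[OF assms(1-3)] by simp
  finally show ?thesis .
qed

lemma mtie_le:
  assumes "k \<in> {1..n}"
  shows "mtie n Ys k \<le> k"
  using assms unfolding mtie_def tie_set_def by (intro Min_le) auto

lemma f_star_le_Tstar_imp_log_wealth:
  fixes \<Gamma> \<alpha> x0 x :: real and \<phi> :: "real \<Rightarrow> real" and n :: nat and Ys :: "nat \<Rightarrow> real"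
  defines "lam \<equiv> lambda_star \<Gamma> \<phi> n \<alpha> Ys x0"
    and "K \<equiv> {k\<in>{1..n}. (1 - x) * (real n + 1) \<le> real (mtie n Ys k)}"
  assumes "0 < lam" and "0 \<le> rhoG \<Gamma>" and "\<forall>t\<in>{0<..<1}. 0 \<le> \<phi> t"
    and "f_star \<Gamma> \<phi> n \<alpha> Ys x0 x \<le> Tstar \<phi> n Ys x"
  shows "ln (1 / \<alpha>) \<le> (\<Sum>k\<in>K. cstar \<phi> n Ys k * lam * (if Ys k > 0 then 1 else 0)
                              - bernoulli_cgf (rhoG \<Gamma>) (cstar \<phi> n Ys k * lam))"
proof -
  let ?cgf = "\<lambda>k. bernoulli_cgf (rhoG \<Gamma>) (cstar \<phi> n Ys k * lam)"
  \<comment> \<open>f* sums the compensators over all ranks \<open>\<ge> (1-x)(n+1)\<close>,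
    T* only over those whose tie class starts there.\<close>
  have "K \<subseteq> upper_idx n x"
  proof
    fix k assume "k \<in> K"
    then have "k \<in> {1..n}" "(1 - x) * (real n + 1) \<le> real (mtie n Ys k)"
      by (simp_all add: K_def)
    moreover have "real (mtie n Ys k) \<le> real k"
      using mtie_le[OF \<open>k \<in> {1..n}\<close>] by simp
    ultimately show "k \<in> upper_idx n x"
      by (simp add: upper_idx_def)
  qed
  moreover have "0 \<le> ?cgf k" for k
    using assms by (simp add: bernoulli_cgf_nonneg cstar_nonneg)
  ultimately have "(\<Sum>k\<in>K. ?cgf k) \<le> (\<Sum>k\<in>upper_idx n x. ?cgf k)"
    by (intro sum_mono2) (simp_all add: upper_idx_def)
  also have "\<dots> = lam * f_star \<Gamma> \<phi> n \<alpha> Ys x0 x - ln (1 / \<alpha>)"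
    using \<open>0 < lam\<close> by (simp add: f_star_def Let_def lam_def bernoulli_cgf_def)
  also have "\<dots> \<le> lam * Tstar \<phi> n Ys x - ln (1 / \<alpha>)"
    using assms by simp
  also have "lam * Tstar \<phi> n Ys x = (\<Sum>k\<in>K. cstar \<phi> n Ys k * lam * (if Ys k > 0 then 1 else 0))"
    by (simp add: Tstar_def K_def sum_distrib_left mult_ac)
  finally show ?thesis
    by (simp add: sum_subtractf)
qed

lemma f_star_le_Tstar_imp_wealth:
  assumes "is_abs_ordering n Y \<sigma>" and "0 < \<alpha>"
    and "0 < lambda_star \<Gamma> \<phi> n \<alpha> (Y \<circ> \<sigma>) x0" and "0 \<le> rhoG \<Gamma>" and "\<forall>t\<in>{0<..<1}. 0 \<le> \<phi> t"
    and "f_star \<Gamma> \<phi> n \<alpha> (Y \<circ> \<sigma>) x0 x \<le> Tstar \<phi> n (Y \<circ> \<sigma>) x"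
  shows "1 / \<alpha> \<le> (\<Prod>i\<in>{i\<in>{1..n}. (1 - x) * (real n + 1) \<le> real (tie_rank n Y i)}.
           tilt_factor (rhoG \<Gamma>) (tie_score \<phi> n Y i * lambda_star \<Gamma> \<phi> n \<alpha> (Y \<circ> \<sigma>) x0) (Y i))"
    (is "_ \<le> (\<Prod>i\<in>?S. _)")
proof -
  define lam where "lam = lambda_star \<Gamma> \<phi> n \<alpha> (Y \<circ> \<sigma>) x0"
  let ?g = "\<lambda>i. tie_score \<phi> n Y i * lam * (if Y i > 0 then 1 else 0)
                  - bernoulli_cgf (rhoG \<Gamma>) (tie_score \<phi> n Y i * lam)"
  have "ln (1 / \<alpha>) \<le> (\<Sum>i\<in>?S. ?g i)"
    using f_star_le_Tstar_imp_log_wealth[OF assms(3-6)]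
      sum_abs_ordering_reindex[OF assms(1), where P = "\<lambda>m. (1 - x) * (real n + 1) \<le> real m"
        and G = "\<lambda>c y. c * lam * (if y > 0 then 1 else 0) - bernoulli_cgf (rhoG \<Gamma>) (c * lam)"
        and \<phi> = \<phi>]
    by (simp add: lam_def)
  then have "exp (ln (1 / \<alpha>)) \<le> exp (\<Sum>i\<in>?S. ?g i)"
    by simp
  then show ?thesis
    using \<open>0 < \<alpha>\<close> by (simp add: exp_sum tilt_factor_def lam_def)
qed

lemma Ypair_no_effect:
  assumes "RT i 1 = RC i 1" "RT i 2 = RC i 2"
  shows "Ypair RC RT z i = (if z i then RC i 1 - RC i 2 else - (RC i 1 - RC i 2))"
  using assms by (simp add: Ypair_def Robs_def Zind_def)

lemma crossing_subset_wealth_event: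
  fixes Y :: "(nat \<Rightarrow> bool) \<Rightarrow> nat \<Rightarrow> real" and D :: "nat \<Rightarrow> real"
  assumes ordering: "\<forall>z. is_abs_ordering n (Y z) (\<sigma> z)"
    and sign_flip: "\<And>z i. i \<in> {1..n} \<Longrightarrow> Y z i = (if z i then D i else - D i)"
    and lam: "\<And>z. lambda_star \<Gamma> \<phi> n \<alpha> (Y z \<circ> \<sigma> z) x0 = lam" "0 < lam"
    and "0 < \<alpha>" "0 \<le> rhoG \<Gamma>" "\<forall>t\<in>{0<..<1}. 0 \<le> \<phi> t"
  shows "{z. \<exists>x\<in>{0<..<1}. Tstar \<phi> n (Y z \<circ> \<sigma> z) x \<ge> f_star \<Gamma> \<phi> n \<alpha> (Y z \<circ> \<sigma> z) x0 x}
    \<subseteq> {z. \<exists>t. 1 / \<alpha> \<le> (\<Prod>i\<in>{i\<in>{1..n}. t \<le> real (tie_rank n D i)}.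
                 tilt_factor (rhoG \<Gamma>) (tie_score \<phi> n D i * lam) (if z i then D i else - D i))}"
proof safe
  fix z x
  assume crossing: "f_star \<Gamma> \<phi> n \<alpha> (Y z \<circ> \<sigma> z) x0 x \<le> Tstar \<phi> n (Y z \<circ> \<sigma> z) x"
  have abs_eq: "\<forall>i\<in>{1..n}. \<bar>Y z i\<bar> = \<bar>D i\<bar>"
    using sign_flip by simp
  have ties: "tie_rank n (Y z) i = tie_rank n D i" "tie_score \<phi> n (Y z) i = tie_score \<phi> n D i"
    if "i \<in> {1..n}" for i
    using tie_block_cong[OF abs_eq] abs_eq that by (simp_all add: tie_rank_def tie_score_def)
  have "1 / \<alpha> \<le> (\<Prod>i\<in>{i\<in>{1..n}. (1 - x) * (real n + 1) \<le> real (tie_rank n (Y z) i)}.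
                   tilt_factor (rhoG \<Gamma>) (tie_score \<phi> n (Y z) i * lam) (Y z i))"
    using f_star_le_Tstar_imp_wealth[OF ordering[rule_format] assms(5) _ assms(6,7) crossing] lam
    by simp
  also have "\<dots> = (\<Prod>i\<in>{i\<in>{1..n}. (1 - x) * (real n + 1) \<le> real (tie_rank n D i)}.
                   tilt_factor (rhoG \<Gamma>) (tie_score \<phi> n D i * lam) (if z i then D i else - D i))"
    using ties sign_flip by (intro prod.cong) auto
  finally show "\<exists>t. 1 / \<alpha> \<le> (\<Prod>i\<in>{i\<in>{1..n}. t \<le> real (tie_rank n D i)}.
                 tilt_factor (rhoG \<Gamma>) (tie_score \<phi> n D i * lam) (if z i then D i else - D i))"
    by blast
qed

theorem theorem4:
  fixes n :: nat and \<Gamma> \<alpha> x0 :: real and \<phi> :: "real \<Rightarrow> real"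
    and RC RT :: "nat \<Rightarrow> nat \<Rightarrow> real" and p :: "nat \<Rightarrow> real"
    and \<sigma> :: "(nat \<Rightarrow> bool) \<Rightarrow> nat \<Rightarrow> nat"
  assumes n_pos: "n \<ge> 1"
    and Gamma: "\<Gamma> \<ge> 1"
    and phi_nonneg: "\<forall>t\<in>{0<..<1}. \<phi> t \<ge> 0"
    and alpha: "0 < \<alpha>" "\<alpha> < 1"
    and x0_pos: "x0 > 0"
    and H0_null: "\<forall>i\<in>{1..n}. \<forall>j\<in>{1,2}. RT i j = RC i j"
    and H0_bias: "\<forall>i\<in>{1..n}. 1 / (1 + \<Gamma>) \<le> p i \<and> p i \<le> \<Gamma> / (1 + \<Gamma>)"
    and ordering: "\<forall>z. is_abs_ordering n (Ypair RC RT z) (\<sigma> z)"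
    and var_pos: "\<forall>z. sigma2 \<Gamma> \<phi> n (Ypair RC RT z \<circ> \<sigma> z) x0 > 0"
  shows "measure_pmf.prob (Pi_pmf {1..n} False (\<lambda>i. bernoulli_pmf (p i)))
           {z. \<exists>x\<in>{0<..<1}. Tstar \<phi> n (Ypair RC RT z \<circ> \<sigma> z) x
                 \<ge> f_star \<Gamma> \<phi> n \<alpha> (Ypair RC RT z \<circ> \<sigma> z) x0 x} \<le> \<alpha>"
proof -
  define D where "D i = RC i 1 - RC i 2" for i
  define lam where "lam = lambda_star \<Gamma> \<phi> n \<alpha> (Ypair RC RT (\<lambda>_. False) \<circ> \<sigma> (\<lambda>_. False)) x0"
  define F where "F i b = tilt_factor (rhoG \<Gamma>) (tie_score \<phi> n D i * lam) (if b then D i else - D i)"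
    for i b
  have sign_flip: "Ypair RC RT z i = (if z i then D i else - D i)" if "i \<in> {1..n}" for z i
    using H0_null that by (simp add: Ypair_no_effect D_def)
  have lam_eq: "lambda_star \<Gamma> \<phi> n \<alpha> (Ypair RC RT z \<circ> \<sigma> z) x0 = lam" for z
    unfolding lam_def using ordering sign_flip by (intro lambda_star_abs_ordering_cong) auto
  have "0 < lam"
    using var_pos alpha by (simp add: lam_def lambda_star_def)
  have rho: "0 \<le> rhoG \<Gamma>" "rhoG \<Gamma> \<le> 1"
    using Gamma by (simp_all add: rhoG_def)
  have p_rho: "1 - rhoG \<Gamma> \<le> p i" "p i \<le> rhoG \<Gamma>" if "i \<in> {1..n}" for i
    using Gamma H0_bias that by (auto simp: rhoG_def field_simps)
  let ?P = "Pi_pmf {1..n} False (\<lambda>i. bernoulli_pmf (p i))"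
  let ?E = "{z. \<exists>x\<in>{0<..<1}. Tstar \<phi> n (Ypair RC RT z \<circ> \<sigma> z) x
               \<ge> f_star \<Gamma> \<phi> n \<alpha> (Ypair RC RT z \<circ> \<sigma> z) x0 x}"
  let ?W = "{z. \<exists>t. 1 / \<alpha> \<le> 1 * (\<Prod>i\<in>{i\<in>{1..n}. t \<le> real (tie_rank n D i)}. F i (z i))}"
  have "?E \<subseteq> ?W"
    using crossing_subset_wealth_event[OF ordering sign_flip lam_eq \<open>0 < lam\<close> alpha(1) rho(1) phi_nonneg]
    by (simp add: F_def)
  then have "emeasure ?P ?E \<le> emeasure ?P ?W"
    by (rule emeasure_mono) simp
  also have "\<dots> \<le> ennreal (1 / (1 / \<alpha>))"
  proof (rule ville_inequality_Pi_pmf)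
    show "(\<integral>\<^sup>+b. F i b \<partial>bernoulli_pmf (p i)) \<le> 1" if "i \<in> {1..n}" for i
      unfolding F_def
      using rho p_rho[OF that] \<open>0 < lam\<close> tie_score_nonneg[OF phi_nonneg]
      by (intro nn_integral_tilt_factor_bernoulli_le_1) auto
  qed (use alpha in \<open>simp_all add: F_def tilt_factor_def\<close>)
  finally show ?thesis
    using alpha by (simp add: measure_pmf.emeasure_eq_measure)
qed

end
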